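(* For $\hat{\Sigma}$ and $\bar{\Sigma}$, we have $\rho(\hat{\boldsymbol{\mathcal{A}}}) = \rho(\bar{\boldsymbol{\mathcal{A}}})$ and $\xi(\hat{\mathbf{A}}_{1:r}) = \xi(\bar{\mathbf{A}}_{1:s})$.
   Context: $\Sigma$ is the MJS $\mathbf{x}_{t+1}=\mathbf{A}_{\omega_t}\mathbf{x}_t+\mathbf{B}_{\omega_t}\mathbf{u}_t$ with $s$ modes and Markov transition matrix $\mathbf{T}$. Given a partition $\hat{\Omega}_{1:r}$ of $[s]$, the reduced MJS $\hat{\Sigma}$ has $r$ modes with $\hat{\mathbf{A}}_k=\frac{1}{|\hat{\Omega}_k|}\sum_{i\in\hat{\Omega}_k}\mathbf{A}_i$, $\hat{\mathbf{B}}_k=\frac{1}{|\hat{\Omega}_k|}\sum_{i\in\hat{\Omega}_k}\mathbf{B}_i$, $\hat{\mathbf{T}}(k,l)=\frac{1}{|\hat{\Omega}_k|}\sum_{i\in\hat{\Omega}_k,j\in\hat{\Omega}_l}\mathbf{T}(i,j)$. The expanded MJS $\bar{\Sigma}$ has $s$ modes with $\bar{\mathbf{A}}_i=\hat{\mathbf{A}}_k$, $\bar{\mathbf{B}}_i=\hat{\mathbf{B}}_k$ for $i\in\hat{\Omega}_k$, and a Markov matrix $\bar{\mathbf{T}}$ satisfying $\sum_{j\in\hat{\Omega}_l}\bar{\mathbf{T}}(i,j)=\hat{\mathbf{T}}(k,l)$ for all $k,l$ and $i\in\hat{\Omega}_k$ (and $\|\bar{\mathbf{T}}-\mathbf{T}\|_\infty,\|\bar{\mathbf{T}}-\mathbf{T}\|_F\le\epsilon_{\mathbf{T}}$).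 The augmented state matrix $\hat{\boldsymbol{\mathcal{A}}}\in\mathbb{R}^{rn^2\times rn^2}$ has $ij$-th $n^2\times n^2$ block $\hat{\mathbf{T}}(j,i)\,\hat{\mathbf{A}}_j\otimes\hat{\mathbf{A}}_j$, and $\bar{\boldsymbol{\mathcal{A}}}\in\mathbb{R}^{sn^2\times sn^2}$ has $ij$-th block $\bar{\mathbf{T}}(j,i)\,\bar{\mathbf{A}}_j\otimes\bar{\mathbf{A}}_j$; $\rho(\cdot)$ is the spectral radius and $\xi(\cdot)$ the joint spectral radius $\xi(\mathbf{M}_{1:m})=\lim_{k\to\infty}\max_{\sigma_{1:k}}\|\mathbf{M}_{\sigma_1}\cdots\mathbf{M}_{\sigma_k}\|^{1/k}$. *)

theory Defs
  imports "HOL-Analysis.Analysis" "Jordan_Normal_Form.Spectral_Radius"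
begin

definition kron :: "real mat \<Rightarrow> real mat \<Rightarrow> real mat" where
  "kron A B = mat (dim_row A * dim_row B) (dim_col A * dim_col B)
     (\<lambda>(i,j). A $$ (i div dim_row B, j div dim_col B) * B $$ (i mod dim_row B, j mod dim_col B))"

(* augmented state matrix: N modes, state dimension n; ij-th n^2 x n^2 block is T(j,i) A_j \<otimes> A_j *)
definition aug_mat :: "nat \<Rightarrow> nat \<Rightarrow> (nat \<Rightarrow> nat \<Rightarrow> real) \<Rightarrow> (nat \<Rightarrow> real mat) \<Rightarrow> real mat" where
  "aug_mat n N T A = mat (N * n\<^sup>2) (N * n\<^sup>2)
     (\<lambda>(a,b). T (b div n\<^sup>2) (a div n\<^sup>2) * kron (A (b div n\<^sup>2)) (A (b div n\<^sup>2)) $$ (a mod n\<^sup>2, b mod n\<^sup>2))"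

definition rho :: "real mat \<Rightarrow> real" where
  "rho M = spectral_radius (map_mat complex_of_real M)"

definition frob_norm :: "real mat \<Rightarrow> real" where
  "frob_norm M = sqrt (\<Sum>i<dim_row M. \<Sum>j<dim_col M. (M $$ (i,j))\<^sup>2)"

definition mat_word_prod :: "nat \<Rightarrow> (nat \<Rightarrow> real mat) \<Rightarrow> nat list \<Rightarrow> real mat" where
  "mat_word_prod n M \<sigma> = foldr (\<lambda>i P. M i * P) \<sigma> (1\<^sub>m n)"

definition jsr :: "nat \<Rightarrow> (nat \<Rightarrow> real mat) \<Rightarrow> nat \<Rightarrow> real" where
  "jsr n M m = lim (\<lambda>k. Max {frob_norm (mat_word_prod n M \<sigma>) powr (1 / real k) | \<sigma>.
       length \<sigma> = k \<and> set \<sigma> \<subseteq> {..<m}})"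

definition markov :: "nat \<Rightarrow> (nat \<Rightarrow> nat \<Rightarrow> real) \<Rightarrow> bool" where
  "markov s T \<longleftrightarrow> (\<forall>i<s. \<forall>j<s. T i j \<ge> 0) \<and> (\<forall>i<s. (\<Sum>j<s. T i j) = 1)"

definition red_mat :: "(nat \<Rightarrow> nat set) \<Rightarrow> (nat \<Rightarrow> real mat) \<Rightarrow> nat \<Rightarrow> nat \<Rightarrow> nat \<Rightarrow> real mat" where
  "red_mat \<Omega> A nr nc k = mat nr nc (\<lambda>(a,b). (\<Sum>i\<in>\<Omega> k. A i $$ (a,b)) / real (card (\<Omega> k)))"

definition red_T :: "(nat \<Rightarrow> nat set) \<Rightarrow> (nat \<Rightarrow> nat \<Rightarrow> real) \<Rightarrow> nat \<Rightarrow> nat \<Rightarrow> real" where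
  "red_T \<Omega> T k l = (\<Sum>i\<in>\<Omega> k. \<Sum>j\<in>\<Omega> l. T i j) / real (card (\<Omega> k))"

definition is_partition :: "nat \<Rightarrow> nat \<Rightarrow> (nat \<Rightarrow> nat set) \<Rightarrow> bool" where
  "is_partition s r \<Omega> \<longleftrightarrow> (\<forall>k<r. \<Omega> k \<noteq> {}) \<and> (\<forall>k<r. \<forall>l<r. k \<noteq> l \<longrightarrow> \<Omega> k \<inter> \<Omega> l = {})
     \<and> (\<Union>k<r. \<Omega> k) = {..<s}"

end

theory Submission
  imports Defs
begin

(* The aggregation matrix agg, which sums the block rows of aug_bar over each class of the
   partition, intertwines the two augmented matrices: agg * aug_bar = aug_hat * agg, because the
   expanded modes are constant on classes and the class row sums of Tbar are That. Hence every
   entry of aug_hat ^ k is a sum of at most s entries of aug_bar ^ k. Conversely, every block of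
   aug_bar ^ k is the kernel of a completely positive map on n x n matrices, so its entries are
   bounded by its diagonal entries; these are nonnegative and therefore bounded by their class
   sums, which are entries of aug_hat ^ k. Since the spectral radius is the exponential growth
   rate of the entries of the powers, the two spectral radii agree. The joint spectral radii
   agree because both families consist of the same matrices. *)

section \<open>Spectral radius and growth of matrix powers\<close>

lemma smult_pow_mat:
  assumes "(A :: 'a::comm_ring_1 mat) \<in> carrier_mat N N"
  shows "(x \<cdot>\<^sub>m A) ^\<^sub>m k = x ^ k \<cdot>\<^sub>m A ^\<^sub>m k"
proof (induction k)
  case 0
  then show ?case using assms by (auto intro!: eq_matI)
next
  case (Suc k)
  have "(x \<cdot>\<^sub>m A) ^\<^sub>m Suc k = (x ^ k \<cdot>\<^sub>m A ^\<^sub>m k) * (x \<cdot>\<^sub>m A)"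
    using Suc by simp
  also have "\<dots> = x ^ Suc k \<cdot>\<^sub>m (A ^\<^sub>m k * A)"
    using assms by (intro eq_matI) (auto simp: mult_ac)
  finally show ?case by simp
qed

lemma eigenvalue_smult_mat:
  fixes A :: "'a::field mat"
  assumes A: "A \<in> carrier_mat N N" and x: "x \<noteq> 0" and ev: "eigenvalue (x \<cdot>\<^sub>m A) \<mu>"
  shows "eigenvalue A (\<mu> / x)"
proof -
  obtain v where v: "v \<in> carrier_vec N" "v \<noteq> 0\<^sub>v N" "(x \<cdot>\<^sub>m A) *\<^sub>v v = \<mu> \<cdot>\<^sub>v v"
    using ev A unfolding eigenvalue_def eigenvector_def by auto
  have "A *\<^sub>v v = (\<mu> / x) \<cdot>\<^sub>v v"
  proof (rule eq_vecI)
    fix i assume "i < dim_vec ((\<mu> / x) \<cdot>\<^sub>v v)"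
    then have i: "i < N" using v by simp
    have "x * (A *\<^sub>v v) $ i = ((x \<cdot>\<^sub>m A) *\<^sub>v v) $ i"
      using i A v(1) by simp
    also have "\<dots> = \<mu> * v $ i"
      using i v by simp
    finally show "(A *\<^sub>v v) $ i = ((\<mu> / x) \<cdot>\<^sub>v v) $ i"
      using i v x by (simp add: field_simps)
  qed (use A v in simp)
  then show ?thesis
    using A v unfolding eigenvalue_def eigenvector_def by auto
qed

lemma spectral_radius_smult_le:
  assumes A: "A \<in> carrier_mat N N" and N: "N > 0" and x: "x \<noteq> 0"
  shows "spectral_radius (x \<cdot>\<^sub>m A) \<le> norm x * spectral_radius A"
proof -
  have xA: "x \<cdot>\<^sub>m A \<in> carrier_mat N N" using A by simp
  obtain \<mu> where \<mu>: "eigenvalue (x \<cdot>\<^sub>m A) \<mu>" "spectral_radius (x \<cdot>\<^sub>m A) = norm \<mu>"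
    using spectral_radius_mem_max(1)[OF xA N] unfolding spectrum_def by auto
  have "norm (\<mu> / x) \<le> spectral_radius A"
    using spectral_radius_mem_max(2)[OF A N] eigenvalue_smult_mat[OF A x \<mu>(1)]
    unfolding spectrum_def by auto
  then show ?thesis
    using \<mu>(2) x by (simp add: norm_divide field_simps)
qed

lemma rho_nonneg:
  assumes "M \<in> carrier_mat N N" and "N > 0"
  shows "0 \<le> rho M"
  using spectral_radius_mem_max(1)[of "map_mat complex_of_real M" N] assms
  unfolding rho_def by auto

lemma pow_entries_bounded_if_rho_less:
  assumes M: "M \<in> carrier_mat N N" and c: "0 < c" and lt: "rho M < c"
  shows "\<exists>C. \<forall>k a b. a < N \<longrightarrow> b < N \<longrightarrow> \<bar>(M ^\<^sub>m k) $$ (a, b)\<bar> \<le> C * c ^ k"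
proof (cases "N = 0")
  case False
  define S where "S = complex_of_real (1 / c) \<cdot>\<^sub>m map_mat complex_of_real M"
  have S: "S \<in> carrier_mat N N" using M by (simp add: S_def)
  have "spectral_radius S \<le> norm (complex_of_real (1 / c)) * rho M"
    unfolding S_def rho_def using M False c by (intro spectral_radius_smult_le[of _ N]) auto
  also have "\<dots> = rho M / c" using c by (simp add: norm_divide)
  also have "\<dots> < 1" using lt c by simp
  finally obtain C where C: "\<And>k. norm_bound (S ^\<^sub>m k) C"
    using spectral_radius_jnf_norm_bound_less_1_upper_triangular[OF S] by auto
  have "\<bar>(M ^\<^sub>m k) $$ (a, b)\<bar> \<le> C * c ^ k" if "a < N" "b < N" for k a b
  proof -
    have "S ^\<^sub>m k = complex_of_real ((1 / c) ^ k) \<cdot>\<^sub>m map_mat complex_of_real (M ^\<^sub>m k)"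
      unfolding S_def using M
      by (simp add: smult_pow_mat[of _ N] of_real_hom.mat_hom_pow[OF M])
    then have "(S ^\<^sub>m k) $$ (a, b) = complex_of_real ((1 / c) ^ k * (M ^\<^sub>m k) $$ (a, b))"
      using that M by simp
    moreover have "norm ((S ^\<^sub>m k) $$ (a, b)) \<le> C"
      using C[of k] that S unfolding norm_bound_def by auto
    ultimately have "\<bar>(1 / c) ^ k * (M ^\<^sub>m k) $$ (a, b)\<bar> \<le> C"
      by (metis norm_of_real)
    then have "(1 / c) ^ k * \<bar>(M ^\<^sub>m k) $$ (a, b)\<bar> \<le> C"
      using c by (simp add: abs_mult)
    then show ?thesis using c by (simp add: field_simps power_divide)
  qed
  then show ?thesis by blast
qed simp

lemma rho_le_if_pow_entries_bounded:
  assumes M: "M \<in> carrier_mat N N" and N: "N > 0" and c: "0 < c"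
    and bnd: "\<And>k a b. a < N \<Longrightarrow> b < N \<Longrightarrow> \<bar>(M ^\<^sub>m k) $$ (a, b)\<bar> \<le> C * c ^ k"
  shows "rho M \<le> c"
proof (rule ccontr)
  assume "\<not> rho M \<le> c"
  define Mc where "Mc = map_mat complex_of_real M"
  have Mc: "Mc \<in> carrier_mat N N" using M by (simp add: Mc_def)
  obtain \<mu> where "eigenvalue Mc \<mu>" and rho_M: "rho M = norm \<mu>"
    using spectral_radius_mem_max(1)[OF Mc N] unfolding rho_def Mc_def spectrum_def by auto
  then obtain v where v_ev: "eigenvector Mc v \<mu>" unfolding eigenvalue_def by auto
  then have v: "v \<in> carrier_vec N" "v \<noteq> 0\<^sub>v N" using Mc unfolding eigenvector_def by auto
  then obtain j where j: "j < N" "v $ j \<noteq> 0" by (metis eq_vecI carrier_vecD index_zero_vec)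
  define V where "V = (\<Sum>b<N. norm (v $ b))"
  have growth: "norm \<mu> ^ k * norm (v $ j) \<le> C * V * c ^ k" for k
  proof -
    have "\<mu> ^ k * v $ j = (Mc ^\<^sub>m k *\<^sub>v v) $ j"
      using eigenvector_pow[OF Mc v_ev] j v by simp
    also have "\<dots> = (\<Sum>b<N. complex_of_real ((M ^\<^sub>m k) $$ (j, b)) * v $ b)"
      using j v M unfolding Mc_def of_real_hom.mat_hom_pow[OF M, symmetric]
      by (simp add: scalar_prod_def atLeast0LessThan)
    finally have "norm \<mu> ^ k * norm (v $ j)
        \<le> (\<Sum>b<N. \<bar>(M ^\<^sub>m k) $$ (j, b)\<bar> * norm (v $ b))"
      by (metis (no_types, lifting) norm_mult norm_power norm_of_real norm_sum sum.cong)
    also have "\<dots> \<le> (\<Sum>b<N. C * c ^ k * norm (v $ b))"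
      using bnd j by (intro sum_mono mult_right_mono) auto
    also have "\<dots> = C * V * c ^ k" by (simp add: V_def sum_distrib_left mult_ac)
    finally show ?thesis .
  qed
  have "1 < norm \<mu> / c" using \<open>\<not> rho M \<le> c\<close> rho_M c by simp
  then obtain k where "C * V / norm (v $ j) < (norm \<mu> / c) ^ k"
    using real_arch_pow by blast
  moreover have "(norm \<mu> / c) ^ k \<le> C * V / norm (v $ j)"
    using growth[of k] c j by (simp add: power_divide field_simps)
  ultimately show False by simp
qed

lemma rho_le_if_pow_entries_dominated:
  assumes M: "M \<in> carrier_mat N N" "N > 0" and M': "M' \<in> carrier_mat N' N'" "N' > 0"
    and dom: "\<And>k B a b. (\<And>a' b'. a' < N' \<Longrightarrow> b' < N' \<Longrightarrow> \<bar>(M' ^\<^sub>m k) $$ (a', b')\<bar> \<le> B)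
      \<Longrightarrow> a < N \<Longrightarrow> b < N \<Longrightarrow> \<bar>(M ^\<^sub>m k) $$ (a, b)\<bar> \<le> D * B"
  shows "rho M \<le> rho M'"
proof (rule ccontr)
  assume "\<not> rho M \<le> rho M'"
  define c where "c = (rho M + rho M') / 2"
  have c: "0 < c" "rho M' < c" "c < rho M"
    using \<open>\<not> rho M \<le> rho M'\<close> rho_nonneg[OF M'] by (auto simp: c_def)
  obtain C where "\<forall>k a b. a < N' \<longrightarrow> b < N' \<longrightarrow> \<bar>(M' ^\<^sub>m k) $$ (a, b)\<bar> \<le> C * c ^ k"
    using pow_entries_bounded_if_rho_less[OF M'(1) c(1,2)] by blast
  then have "\<bar>(M ^\<^sub>m k) $$ (a, b)\<bar> \<le> (D * C) * c ^ k" if "a < N" "b < N" for k a b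
    using dom[of k "C * c ^ k" a b] that by (simp add: mult.assoc)
  then have "rho M \<le> c" by (rule rho_le_if_pow_entries_bounded[OF M c(1)])
  with c(3) show False by simp
qed

section \<open>Completely positive kernels\<close>

(* f a b c d is the coefficient of X c d in entry (a, b) of the image of X under a completely
   positive map X \<mapsto> \<Sum> w P X P\<^sup>T, w \<ge> 0. *)
inductive cp_kernel :: "(nat \<Rightarrow> nat \<Rightarrow> nat \<Rightarrow> nat \<Rightarrow> real) \<Rightarrow> bool" where
  cp_kernel_zero: "cp_kernel (\<lambda>_ _ _ _. 0)"
| cp_kernel_rank1: "cp_kernel f \<Longrightarrow> 0 \<le> w \<Longrightarrow> cp_kernel (\<lambda>a b c d. f a b c d + w * P a c * P b d)"

lemma cp_kernel_add: "cp_kernel g \<Longrightarrow> cp_kernel f \<Longrightarrow> cp_kernel (\<lambda>a b c d. f a b c d + g a b c d)"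
proof (induction g rule: cp_kernel.induct)
  case (cp_kernel_rank1 g w P)
  then have "cp_kernel (\<lambda>a b c d. (f a b c d + g a b c d) + w * P a c * P b d)"
    by (intro cp_kernel.cp_kernel_rank1)
  then show ?case by (simp add: add.assoc)
qed simp

lemma cp_kernel_scale: "cp_kernel f \<Longrightarrow> 0 \<le> t \<Longrightarrow> cp_kernel (\<lambda>a b c d. t * f a b c d)"
proof (induction f rule: cp_kernel.induct)
  case (cp_kernel_rank1 f w P)
  then have "cp_kernel (\<lambda>a b c d. t * f a b c d + (t * w) * P a c * P b d)"
    by (intro cp_kernel.cp_kernel_rank1) auto
  then show ?case by (simp add: distrib_left mult.assoc)
qed (simp add: cp_kernel.cp_kernel_zero)

lemma cp_kernel_sum:
  "finite S \<Longrightarrow> (\<And>x. x \<in> S \<Longrightarrow> cp_kernel (F x)) \<Longrightarrow> cp_kernel (\<lambda>a b c d. \<Sum>x\<in>S. F x a b c d)"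
proof (induction S rule: finite_induct)
  case (insert x S)
  then have "cp_kernel (\<lambda>a b c d. F x a b c d + (\<Sum>x\<in>S. F x a b c d))"
    by (intro cp_kernel_add) auto
  then show ?case using insert by simp
qed (simp add: cp_kernel.cp_kernel_zero)

lemma cp_kernel_comp:
  "cp_kernel f \<Longrightarrow> cp_kernel (\<lambda>a b c d. \<Sum>x<n. \<Sum>y<n. f a b x y * Q x c * Q y d)"
proof (induction f rule: cp_kernel.induct)
  case (cp_kernel_rank1 f w P)
  define PQ where "PQ = (\<lambda>a c. \<Sum>x<n. P a x * Q x c)"
  have "(\<Sum>x<n. \<Sum>y<n. (f a b x y + w * P a x * P b y) * Q x c * Q y d)
     = (\<Sum>x<n. \<Sum>y<n. f a b x y * Q x c * Q y d) + w * PQ a c * PQ b d" for a b c d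
    by (simp add: PQ_def sum_product sum_distrib_left sum.distrib algebra_simps)
  moreover have "cp_kernel (\<lambda>a b c d. (\<Sum>x<n. \<Sum>y<n. f a b x y * Q x c * Q y d) + w * PQ a c * PQ b d)"
    using cp_kernel_rank1 by (intro cp_kernel.cp_kernel_rank1)
  ultimately show ?case by simp
qed (simp add: cp_kernel.cp_kernel_zero)

lemma cp_kernel_diag_nonneg: "cp_kernel f \<Longrightarrow> 0 \<le> f a a c c"
  by (induction f rule: cp_kernel.induct) (simp_all add: mult.assoc)

lemma cp_kernel_abs_le: "cp_kernel f \<Longrightarrow> \<bar>f a b c d\<bar> \<le> (f a a c c + f b b d d) / 2"
proof (induction f rule: cp_kernel.induct)
  case (cp_kernel_rank1 f w P)
  have "2 * \<bar>P a c\<bar> * \<bar>P b d\<bar> \<le> (P a c)\<^sup>2 + (P b d)\<^sup>2"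
    using sum_squares_bound[of "\<bar>P a c\<bar>" "\<bar>P b d\<bar>"] by simp
  then have "\<bar>w * P a c * P b d\<bar> \<le> (w * (P a c)\<^sup>2 + w * (P b d)\<^sup>2) / 2"
    using cp_kernel_rank1(2) mult_left_mono[of _ _ w] by (fastforce simp: abs_mult algebra_simps)
  then show ?case
    using cp_kernel_rank1(3) abs_triangle_ineq[of "f a b c d" "w * P a c * P b d"]
    by (simp add: power2_eq_square algebra_simps)
qed simp

lemma block_index_less: "i < N \<Longrightarrow> p < m \<Longrightarrow> i * m + p < N * (m::nat)"
proof -
  assume "i < N" "p < m"
  then have "i * m + p < (i + 1) * m" by simp
  also have "\<dots> \<le> N * m" using \<open>i < N\<close> by (intro mult_right_mono) auto
  finally show ?thesis .
qed

lemma block_index_div [simp]: "p < m \<Longrightarrow> (i * m + p) div m = (i::nat)"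
  by simp

lemma block_index_mod [simp]: "p < m \<Longrightarrow> (i * m + p) mod m = (p::nat)"
  by simp

lemma block_index_eq_iff: "p < m \<Longrightarrow> q < m \<Longrightarrow> i * m + p = j * m + q \<longleftrightarrow> i = j \<and> p = (q::nat)"
  by (metis block_index_div block_index_mod)

lemma block_index_cases:
  assumes "a < N * (m::nat)"
  obtains i p where "i < N" "p < m" "a = i * m + p"
proof
  show "a div m < N" using assms by (simp add: less_mult_imp_div_less)
  show "a mod m < m" using assms by (cases "m = 0") auto
qed simp

lemma sum_lessThan_mult: "(\<Sum>c < a * b. h c) = (\<Sum>i<a. \<Sum>j<(b::nat). h (i * b + j))"
  by (simp add: sum_mult_product add.commute)

lemma aug_mat_carrier: "aug_mat n N T A \<in> carrier_mat (N * n\<^sup>2) (N * n\<^sup>2)"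
  by (simp add: aug_mat_def)

lemma aug_mat_entry:
  assumes "A j \<in> carrier_mat n n" "i < N" "j < N" "p < n\<^sup>2" "q < n\<^sup>2"
  shows "aug_mat n N T A $$ (i * n\<^sup>2 + p, j * n\<^sup>2 + q)
    = T j i * (A j $$ (p div n, q div n) * A j $$ (p mod n, q mod n))"
proof -
  have "p < n * n" "q < n * n" using assms(4,5) by (simp_all add: power2_eq_square)
  then show ?thesis
    using assms block_index_less[of i N p "n\<^sup>2"] block_index_less[of j N q "n\<^sup>2"]
    by (simp add: aug_mat_def kron_def)
qed

lemma aug_mat_pow_Suc_entry:
  assumes A: "A j \<in> carrier_mat n n" and a: "a < N * n\<^sup>2" and j: "j < N" and q: "q < n\<^sup>2"
  shows "(aug_mat n N T A ^\<^sub>m Suc k) $$ (a, j * n\<^sup>2 + q)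
    = (\<Sum>j'<N. \<Sum>q'<n\<^sup>2. (aug_mat n N T A ^\<^sub>m k) $$ (a, j' * n\<^sup>2 + q')
        * (T j j' * (A j $$ (q' div n, q div n) * A j $$ (q' mod n, q mod n))))"
proof -
  let ?G = "aug_mat n N T A"
  have "(?G ^\<^sub>m Suc k) $$ (a, j * n\<^sup>2 + q)
      = (\<Sum>c < N * n\<^sup>2. (?G ^\<^sub>m k) $$ (a, c) * ?G $$ (c, j * n\<^sup>2 + q))"
    using a block_index_less[OF j q] aug_mat_carrier[of n N T A]
    by (simp add: scalar_prod_def atLeast0LessThan)
  then show ?thesis
    unfolding sum_lessThan_mult by (simp add: aug_mat_entry[where A = A and j = j, OF A] j q)
qed

lemma pair_index_less: "p1 < n \<Longrightarrow> p2 < n \<Longrightarrow> p1 * n + p2 < (n::nat)\<^sup>2"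
  using block_index_less[of p1 n p2 n] by (simp add: power2_eq_square)

lemma aug_mat_pow_block_cp_kernel:
  assumes A: "\<forall>j<N. A j \<in> carrier_mat n n" and T: "\<forall>i<N. \<forall>j<N. 0 \<le> T i j"
    and i: "i < N" and j: "j < N"
  shows "\<exists>f. cp_kernel f \<and> (\<forall>p1<n. \<forall>p2<n. \<forall>q1<n. \<forall>q2<n.
    (aug_mat n N T A ^\<^sub>m k) $$ (i * n\<^sup>2 + (p1 * n + p2), j * n\<^sup>2 + (q1 * n + q2)) = f p1 p2 q1 q2)"
  using j
proof (induction k arbitrary: j)
  case 0
  define \<delta> where "\<delta> = (\<lambda>x y::nat. if x = y then 1 else (0::real))"
  have "cp_kernel (\<lambda>a b c d. 0 + \<delta> i j * \<delta> a c * \<delta> b d)"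
    by (intro cp_kernel.intros) (auto simp: \<delta>_def)
  moreover have "(aug_mat n N T A ^\<^sub>m 0) $$ (i * n\<^sup>2 + (p1 * n + p2), j * n\<^sup>2 + (q1 * n + q2))
      = 0 + \<delta> i j * \<delta> p1 q1 * \<delta> p2 q2" if "p1 < n" "p2 < n" "q1 < n" "q2 < n" for p1 p2 q1 q2
    using that i 0 pair_index_less block_index_less[of _ N _ "n\<^sup>2"]
      block_index_eq_iff[of "p1 * n + p2" "n\<^sup>2"] block_index_eq_iff[of p2 n q2]
    by (simp add: aug_mat_def \<delta>_def)
  ultimately show ?case by blast
next
  case (Suc k)
  let ?G = "aug_mat n N T A"
  obtain F where F: "\<And>j'. j' < N \<Longrightarrow> cp_kernel (F j') \<and> (\<forall>p1<n. \<forall>p2<n. \<forall>q1<n. \<forall>q2<n.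
    (?G ^\<^sub>m k) $$ (i * n\<^sup>2 + (p1 * n + p2), j' * n\<^sup>2 + (q1 * n + q2)) = F j' p1 p2 q1 q2)"
    using Suc.IH by metis
  define f where "f = (\<lambda>a b c d. \<Sum>j'<N. T j j' *
    (\<Sum>x<n. \<Sum>y<n. F j' a b x y * A j $$ (x, c) * A j $$ (y, d)))"
  show ?case
  proof (intro exI conjI allI impI)
    show "cp_kernel f"
      unfolding f_def using F T Suc.prems by (intro cp_kernel_sum cp_kernel_scale cp_kernel_comp) auto
    fix p1 p2 q1 q2 assume p: "p1 < n" "p2 < n" "q1 < n" "q2 < n"
    have "(?G ^\<^sub>m Suc k) $$ (i * n\<^sup>2 + (p1 * n + p2), j * n\<^sup>2 + (q1 * n + q2))
      = (\<Sum>j'<N. \<Sum>x<n. \<Sum>y<n. (?G ^\<^sub>m k) $$ (i * n\<^sup>2 + (p1 * n + p2), j' * n\<^sup>2 + (x * n + y))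
          * (T j j' * (A j $$ (x, q1) * A j $$ (y, q2))))"
      using aug_mat_pow_Suc_entry[of A j n "i * n\<^sup>2 + (p1 * n + p2)" N "q1 * n + q2" T k]
        A Suc.prems p block_index_less[OF i pair_index_less] pair_index_less[OF p(3,4)]
      by (simp add: power2_eq_square sum_lessThan_mult[of _ n n])
    also have "\<dots> = (\<Sum>j'<N. \<Sum>x<n. \<Sum>y<n. F j' p1 p2 x y * (T j j' * (A j $$ (x, q1) * A j $$ (y, q2))))"
      using F p by (intro sum.cong refl) auto
    also have "\<dots> = f p1 p2 q1 q2"
      by (simp add: f_def sum_distrib_left mult_ac)
    finally show "(?G ^\<^sub>m Suc k) $$ (i * n\<^sup>2 + (p1 * n + p2), j * n\<^sup>2 + (q1 * n + q2))
      = f p1 p2 q1 q2" .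
  qed
qed

lemma mat_word_prod_reindex:
  assumes "M ` I \<subseteq> M' ` J" and "set \<sigma> \<subseteq> I"
  shows "\<exists>\<tau>. length \<tau> = length \<sigma> \<and> set \<tau> \<subseteq> J \<and> mat_word_prod n M' \<tau> = mat_word_prod n M \<sigma>"
  using assms(2)
proof (induction \<sigma>)
  case Nil
  then show ?case by (simp add: mat_word_prod_def)
next
  case (Cons i \<sigma>)
  obtain j where "j \<in> J" "M' j = M i" using assms(1) Cons.prems by force
  moreover obtain \<tau> where "length \<tau> = length \<sigma>" "set \<tau> \<subseteq> J"
    "mat_word_prod n M' \<tau> = mat_word_prod n M \<sigma>"
    using Cons by auto
  ultimately show ?case
    by (intro exI[of _ "j # \<tau>"]) (simp add: mat_word_prod_def)
qed

lemma jsr_eq_if_same_image: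
  assumes "M ` {..<m} = M' ` {..<m'}"
  shows "jsr n M m = jsr n M' m'"
proof -
  have "{frob_norm (mat_word_prod n M \<sigma>) powr (1 / real k) | \<sigma>. length \<sigma> = k \<and> set \<sigma> \<subseteq> {..<m}}
      \<subseteq> {frob_norm (mat_word_prod n M' \<sigma>) powr (1 / real k) | \<sigma>. length \<sigma> = k \<and> set \<sigma> \<subseteq> {..<m'}}"
    (is "?W M m \<subseteq> ?W M' m'")
    if sub: "M ` {..<m} \<subseteq> M' ` {..<m'}" for M M' :: "nat \<Rightarrow> real mat" and m m' k
  proof
    fix x assume "x \<in> ?W M m"
    then obtain \<sigma> where x: "x = frob_norm (mat_word_prod n M \<sigma>) powr (1 / real k)"
      and \<sigma>: "length \<sigma> = k" "set \<sigma> \<subseteq> {..<m}"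
      by blast
    then obtain \<tau> where "length \<tau> = k" "set \<tau> \<subseteq> {..<m'}"
      "mat_word_prod n M' \<tau> = mat_word_prod n M \<sigma>"
      using mat_word_prod_reindex[OF sub \<sigma>(2)] by metis
    then show "x \<in> ?W M' m'" unfolding x by (metis (mono_tags, lifting) mem_Collect_eq)
  qed
  then show ?thesis
    unfolding jsr_def using assms by (metis (no_types, lifting) subset_antisym order_refl)
qed

section \<open>Lumping of the expanded system\<close>

lemma intertwining_pow_mat:
  assumes S: "S \<in> carrier_mat nr nc" and X: "X \<in> carrier_mat nc nc" and Y: "Y \<in> carrier_mat nr nr"
    and SX: "S * X = Y * S"
  shows "S * X ^\<^sub>m k = Y ^\<^sub>m k * S"
proof (induction k)
  case 0
  then show ?case using S X Y by simp
next
  case (Suc k)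
  have "S * X ^\<^sub>m Suc k = (S * X ^\<^sub>m k) * X"
    using S X by (simp add: assoc_mult_mat[of _ nr nc _ nc _ nc])
  also have "\<dots> = Y ^\<^sub>m k * (S * X)"
    using Suc S X Y by (simp add: assoc_mult_mat[of _ nr nr _ nc _ nc])
  also have "\<dots> = Y ^\<^sub>m Suc k * S"
    using S Y by (simp add: SX assoc_mult_mat[of _ nr nr _ nr _ nc])
  finally show ?case .
qed

locale mjs_lumping =
  fixes n s r :: nat and \<Omega> :: "nat \<Rightarrow> nat set"
    and Abar Ahat :: "nat \<Rightarrow> real mat" and Tbar That :: "nat \<Rightarrow> nat \<Rightarrow> real"
  assumes partition: "is_partition s r \<Omega>"
    and Ahat_carrier: "\<And>l. l < r \<Longrightarrow> Ahat l \<in> carrier_mat n n"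
    and Abar_Ahat: "\<And>l i. l < r \<Longrightarrow> i \<in> \<Omega> l \<Longrightarrow> Abar i = Ahat l"
    and Tbar_class_sum: "\<And>l m i. l < r \<Longrightarrow> m < r \<Longrightarrow> i \<in> \<Omega> l \<Longrightarrow> (\<Sum>j\<in>\<Omega> m. Tbar i j) = That l m"
    and Tbar_nonneg: "\<And>i j. i < s \<Longrightarrow> j < s \<Longrightarrow> 0 \<le> Tbar i j"
begin

abbreviation aug_bar :: "real mat" where "aug_bar \<equiv> aug_mat n s Tbar Abar"
abbreviation aug_hat :: "real mat" where "aug_hat \<equiv> aug_mat n r That Ahat"

lemma class_subset: "l < r \<Longrightarrow> \<Omega> l \<subseteq> {..<s}"
  using partition unfolding is_partition_def by blast

lemma finite_class: "l < r \<Longrightarrow> finite (\<Omega> l)"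
  using class_subset finite_subset by blast

lemma class_nonempty: "l < r \<Longrightarrow> \<Omega> l \<noteq> {}"
  using partition unfolding is_partition_def by blast

lemma class_unique: "l < r \<Longrightarrow> m < r \<Longrightarrow> i \<in> \<Omega> l \<Longrightarrow> i \<in> \<Omega> m \<Longrightarrow> l = m"
  using partition unfolding is_partition_def by blast

lemma class_exists:
  assumes "i < s"
  obtains l where "l < r" "i \<in> \<Omega> l"
  using partition assms unfolding is_partition_def by blast

lemma Abar_carrier:
  assumes "i < s"
  shows "Abar i \<in> carrier_mat n n"
proof -
  obtain l where "l < r" "i \<in> \<Omega> l" by (rule class_exists[OF assms])
  then show ?thesis using Abar_Ahat Ahat_carrier by simp
qed

lemma Abar_image: "Abar ` {..<s} = Ahat ` {..<r}"
proof
  show "Abar ` {..<s} \<subseteq> Ahat ` {..<r}"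
  proof
    fix A assume "A \<in> Abar ` {..<s}"
    then obtain i where i: "i < s" "A = Abar i" by blast
    obtain l where "l < r" "i \<in> \<Omega> l" by (rule class_exists[OF i(1)])
    then show "A \<in> Ahat ` {..<r}" using i(2) Abar_Ahat by simp
  qed
  show "Ahat ` {..<r} \<subseteq> Abar ` {..<s}"
  proof
    fix A assume "A \<in> Ahat ` {..<r}"
    then obtain l i where l: "l < r" "i \<in> \<Omega> l" and A: "A = Ahat l"
      using class_nonempty by blast
    then have "i < s" using class_subset by blast
    moreover have "A = Abar i" using A Abar_Ahat[OF l] by simp
    ultimately show "A \<in> Abar ` {..<s}" by blast
  qed
qed

definition agg :: "real mat" where
  "agg = mat (r * n\<^sup>2) (s * n\<^sup>2)
     (\<lambda>(a, b). if b div n\<^sup>2 \<in> \<Omega> (a div n\<^sup>2) \<and> a mod n\<^sup>2 = b mod n\<^sup>2 then 1 else 0)"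

lemma agg_carrier: "agg \<in> carrier_mat (r * n\<^sup>2) (s * n\<^sup>2)"
  by (simp add: agg_def)

lemma agg_entry:
  assumes "l < r" "i < s" "p < n\<^sup>2" "p' < n\<^sup>2"
  shows "agg $$ (l * n\<^sup>2 + p, i * n\<^sup>2 + p') = (if i \<in> \<Omega> l \<and> p = p' then 1 else 0)"
  using assms block_index_less[of l r p "n\<^sup>2"] block_index_less[of i s p' "n\<^sup>2"]
  by (simp add: agg_def)

lemma agg_mult_entry:
  assumes X: "X \<in> carrier_mat (s * n\<^sup>2) nc" and l: "l < r" and p: "p < n\<^sup>2" and b: "b < nc"
  shows "(agg * X) $$ (l * n\<^sup>2 + p, b) = (\<Sum>i\<in>\<Omega> l. X $$ (i * n\<^sup>2 + p, b))"
proof -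
  have "(agg * X) $$ (l * n\<^sup>2 + p, b)
      = (\<Sum>i<s. \<Sum>p'<n\<^sup>2. agg $$ (l * n\<^sup>2 + p, i * n\<^sup>2 + p') * X $$ (i * n\<^sup>2 + p', b))"
    using X b block_index_less[OF l p] agg_carrier
    by (simp add: scalar_prod_def atLeast0LessThan sum_lessThan_mult)
  also have "\<dots> = (\<Sum>i<s. \<Sum>p'<n\<^sup>2. if i \<in> \<Omega> l \<and> p = p' then X $$ (i * n\<^sup>2 + p', b) else 0)"
    using l p by (intro sum.cong refl) (simp add: agg_entry)
  also have "\<dots> = (\<Sum>i<s. if i \<in> \<Omega> l then X $$ (i * n\<^sup>2 + p, b) else 0)"
    using p by (intro sum.cong refl) (simp add: sum.delta')
  also have "\<dots> = (\<Sum>i\<in>\<Omega> l. X $$ (i * n\<^sup>2 + p, b))"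
    unfolding sum.inter_restrict[OF finite_lessThan, symmetric]
    using class_subset[OF l] by (simp add: Int_absorb1)
  finally show ?thesis .
qed

lemma mult_agg_entry:
  assumes X: "X \<in> carrier_mat nr (r * n\<^sup>2)" and a: "a < nr"
    and m: "m < r" and j: "j \<in> \<Omega> m" and q: "q < n\<^sup>2"
  shows "(X * agg) $$ (a, j * n\<^sup>2 + q) = X $$ (a, m * n\<^sup>2 + q)"
proof -
  have js: "j < s" using class_subset[OF m] j by blast
  have "(X * agg) $$ (a, j * n\<^sup>2 + q)
      = (\<Sum>l<r. \<Sum>q'<n\<^sup>2. X $$ (a, l * n\<^sup>2 + q') * agg $$ (l * n\<^sup>2 + q', j * n\<^sup>2 + q))"
    using X a block_index_less[OF js q] agg_carrier
    by (simp add: scalar_prod_def atLeast0LessThan sum_lessThan_mult)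
  also have "\<dots> = (\<Sum>l<r. \<Sum>q'<n\<^sup>2. if l = m \<and> q' = q then X $$ (a, l * n\<^sup>2 + q') else 0)"
  proof (intro sum.cong refl)
    fix l q' assume "l \<in> {..<r}" "q' \<in> {..<n\<^sup>2}"
    moreover have "j \<in> \<Omega> l \<longleftrightarrow> l = m" if "l < r" using class_unique[OF that m _ j] j by blast
    ultimately show "X $$ (a, l * n\<^sup>2 + q') * agg $$ (l * n\<^sup>2 + q', j * n\<^sup>2 + q)
        = (if l = m \<and> q' = q then X $$ (a, l * n\<^sup>2 + q') else 0)"
      using js q by (simp add: agg_entry)
  qed
  also have "\<dots> = (\<Sum>l<r. if l = m then X $$ (a, l * n\<^sup>2 + q) else 0)"
    using q by (intro sum.cong refl) (simp add: sum.delta)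
  also have "\<dots> = X $$ (a, m * n\<^sup>2 + q)"
    using m by simp
  finally show ?thesis .
qed

lemma agg_intertwines: "agg * aug_bar = aug_hat * agg"
proof (rule eq_matI)
  fix a b assume "a < dim_row (aug_hat * agg)" "b < dim_col (aug_hat * agg)"
  then have "a < r * n\<^sup>2" "b < s * n\<^sup>2" using agg_carrier by (simp_all add: aug_mat_def)
  then obtain l p j q where l: "l < r" and p: "p < n\<^sup>2" and a: "a = l * n\<^sup>2 + p"
    and j: "j < s" and q: "q < n\<^sup>2" and b: "b = j * n\<^sup>2 + q"
    by (metis block_index_cases)
  obtain m where m: "m < r" "j \<in> \<Omega> m" using class_exists[OF j] by blast
  define K where "K = Ahat m $$ (p div n, q div n) * Ahat m $$ (p mod n, q mod n)"
  have "(agg * aug_bar) $$ (a, b) = (\<Sum>i\<in>\<Omega> l. aug_bar $$ (i * n\<^sup>2 + p, j * n\<^sup>2 + q))"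
    unfolding a b by (rule agg_mult_entry[OF aug_mat_carrier l p block_index_less[OF j q]])
  also have "\<dots> = (\<Sum>i\<in>\<Omega> l. Tbar j i * K)"
  proof (rule sum.cong[OF refl])
    fix i assume "i \<in> \<Omega> l"
    then have "i < s" using class_subset[OF l] by blast
    then show "aug_bar $$ (i * n\<^sup>2 + p, j * n\<^sup>2 + q) = Tbar j i * K"
      using aug_mat_entry[where A = Abar, OF Abar_carrier[OF j] _ j p q] Abar_Ahat[OF m]
      by (simp add: K_def)
  qed
  also have "\<dots> = That m l * K"
    using Tbar_class_sum[OF m(1) l m(2)] by (simp add: sum_distrib_right[symmetric])
  also have "\<dots> = (aug_hat * agg) $$ (a, b)"
    unfolding a b using l p q m
    by (simp add: mult_agg_entry[OF aug_mat_carrier] block_index_less aug_mat_entry Ahat_carrier K_def)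
  finally show "(agg * aug_bar) $$ (a, b) = (aug_hat * agg) $$ (a, b)" .
qed (simp_all add: agg_def aug_mat_def)

lemma aug_hat_pow_entry:
  assumes l: "l < r" and m: "m < r" and j: "j \<in> \<Omega> m" and p: "p < n\<^sup>2" and q: "q < n\<^sup>2"
  shows "(aug_hat ^\<^sub>m k) $$ (l * n\<^sup>2 + p, m * n\<^sup>2 + q)
    = (\<Sum>i\<in>\<Omega> l. (aug_bar ^\<^sub>m k) $$ (i * n\<^sup>2 + p, j * n\<^sup>2 + q))"
proof -
  have j_s: "j < s" using class_subset[OF m] j by blast
  have "(\<Sum>i\<in>\<Omega> l. (aug_bar ^\<^sub>m k) $$ (i * n\<^sup>2 + p, j * n\<^sup>2 + q))
      = (agg * aug_bar ^\<^sub>m k) $$ (l * n\<^sup>2 + p, j * n\<^sup>2 + q)"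
    using agg_mult_entry[OF pow_carrier_mat[OF aug_mat_carrier] l p block_index_less[OF j_s q]] ..
  also have "\<dots> = (aug_hat ^\<^sub>m k * agg) $$ (l * n\<^sup>2 + p, j * n\<^sup>2 + q)"
    by (simp add: intertwining_pow_mat[OF agg_carrier aug_mat_carrier aug_mat_carrier agg_intertwines])
  also have "\<dots> = (aug_hat ^\<^sub>m k) $$ (l * n\<^sup>2 + p, m * n\<^sup>2 + q)"
    using mult_agg_entry[OF pow_carrier_mat[OF aug_mat_carrier] block_index_less[OF l p] m j q] .
  finally show ?thesis ..
qed

lemma aug_hat_pow_entry_bound:
  assumes B: "\<And>a b. a < s * n\<^sup>2 \<Longrightarrow> b < s * n\<^sup>2 \<Longrightarrow> \<bar>(aug_bar ^\<^sub>m k) $$ (a, b)\<bar> \<le> B"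
    and a: "a < r * n\<^sup>2" and b: "b < r * n\<^sup>2"
  shows "\<bar>(aug_hat ^\<^sub>m k) $$ (a, b)\<bar> \<le> real s * B"
proof -
  obtain l p where l: "l < r" and p: "p < n\<^sup>2" and a_eq: "a = l * n\<^sup>2 + p"
    by (rule block_index_cases[OF a])
  obtain m q where m: "m < r" and q: "q < n\<^sup>2" and b_eq: "b = m * n\<^sup>2 + q"
    by (rule block_index_cases[OF b])
  obtain j where j: "j \<in> \<Omega> m" using class_nonempty[OF m] by blast
  then have j_s: "j < s" using class_subset[OF m] by blast
  have B_bar: "\<bar>(aug_bar ^\<^sub>m k) $$ (i * n\<^sup>2 + p, j * n\<^sup>2 + q)\<bar> \<le> B" if "i \<in> \<Omega> l" for i
  proof -
    have "i < s" using that class_subset[OF l] by blast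
    then show ?thesis by (rule B[OF block_index_less[OF _ p] block_index_less[OF j_s q]])
  qed
  have "\<bar>(aug_hat ^\<^sub>m k) $$ (a, b)\<bar> \<le> (\<Sum>i\<in>\<Omega> l. \<bar>(aug_bar ^\<^sub>m k) $$ (i * n\<^sup>2 + p, j * n\<^sup>2 + q)\<bar>)"
    unfolding a_eq b_eq aug_hat_pow_entry[OF l m j p q] by (rule sum_abs)
  also have "\<dots> \<le> real (card (\<Omega> l)) * B"
    using sum_mono[of "\<Omega> l", OF B_bar] by simp
  also have "\<dots> \<le> real s * B"
  proof (rule mult_right_mono)
    show "real (card (\<Omega> l)) \<le> real s"
      using card_mono[OF finite_lessThan class_subset[OF l]] by simp
    obtain i where "i \<in> \<Omega> l" using class_nonempty[OF l] by blast
    then show "0 \<le> B" using B_bar[of i] abs_ge_zero order_trans by blast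
  qed
  finally show ?thesis .
qed

lemma aug_bar_pow_block_cp_kernel:
  assumes "i < s" "j < s"
  shows "\<exists>f. cp_kernel f \<and> (\<forall>p1<n. \<forall>p2<n. \<forall>q1<n. \<forall>q2<n.
    (aug_bar ^\<^sub>m k) $$ (i * n\<^sup>2 + (p1 * n + p2), j * n\<^sup>2 + (q1 * n + q2)) = f p1 p2 q1 q2)"
  using assms Abar_carrier Tbar_nonneg by (intro aug_mat_pow_block_cp_kernel) auto

lemma aug_bar_pow_diag_le:
  assumes l: "l < r" "i \<in> \<Omega> l" and m: "m < r" "j \<in> \<Omega> m" and p: "p < n" and q: "q < n"
  shows "(aug_bar ^\<^sub>m k) $$ (i * n\<^sup>2 + (p * n + p), j * n\<^sup>2 + (q * n + q))
    \<le> (aug_hat ^\<^sub>m k) $$ (l * n\<^sup>2 + (p * n + p), m * n\<^sup>2 + (q * n + q))"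
proof -
  have j_s: "j < s" using class_subset[OF m(1)] m(2) by blast
  have "0 \<le> (aug_bar ^\<^sub>m k) $$ (i' * n\<^sup>2 + (p * n + p), j * n\<^sup>2 + (q * n + q))" if "i' \<in> \<Omega> l" for i'
  proof -
    have "i' < s" using class_subset[OF l(1)] that by blast
    then obtain f where "cp_kernel f" and "\<forall>p1<n. \<forall>p2<n. \<forall>q1<n. \<forall>q2<n.
      (aug_bar ^\<^sub>m k) $$ (i' * n\<^sup>2 + (p1 * n + p2), j * n\<^sup>2 + (q1 * n + q2)) = f p1 p2 q1 q2"
      using aug_bar_pow_block_cp_kernel[OF _ j_s] by blast
    then show ?thesis using cp_kernel_diag_nonneg[of f p q] p q by simp
  qed
  then have "(aug_bar ^\<^sub>m k) $$ (i * n\<^sup>2 + (p * n + p), j * n\<^sup>2 + (q * n + q))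
      \<le> (\<Sum>i'\<in>\<Omega> l. (aug_bar ^\<^sub>m k) $$ (i' * n\<^sup>2 + (p * n + p), j * n\<^sup>2 + (q * n + q)))"
    using finite_class[OF l(1)] l(2) by (intro member_le_sum) auto
  also have "\<dots> = (aug_hat ^\<^sub>m k) $$ (l * n\<^sup>2 + (p * n + p), m * n\<^sup>2 + (q * n + q))"
    using aug_hat_pow_entry[OF l(1) m pair_index_less[OF p p] pair_index_less[OF q q]] by simp
  finally show ?thesis .
qed

(* A completely positive block is controlled by its diagonal, which lumping bounds by aug_hat. *)
lemma aug_bar_pow_entry_bound:
  assumes B: "\<And>a b. a < r * n\<^sup>2 \<Longrightarrow> b < r * n\<^sup>2 \<Longrightarrow> \<bar>(aug_hat ^\<^sub>m k) $$ (a, b)\<bar> \<le> B"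
    and a: "a < s * n\<^sup>2" and b: "b < s * n\<^sup>2"
  shows "\<bar>(aug_bar ^\<^sub>m k) $$ (a, b)\<bar> \<le> B"
proof -
  obtain i p where i: "i < s" and "p < n\<^sup>2" and a_eq: "a = i * n\<^sup>2 + p"
    by (rule block_index_cases[OF a])
  then have "p < n * n" by (simp add: power2_eq_square)
  then obtain p1 p2 where p: "p1 < n" "p2 < n" and p_eq: "p = p1 * n + p2"
    by (rule block_index_cases)
  obtain j q where j: "j < s" and "q < n\<^sup>2" and b_eq: "b = j * n\<^sup>2 + q"
    by (rule block_index_cases[OF b])
  then have "q < n * n" by (simp add: power2_eq_square)
  then obtain q1 q2 where q: "q1 < n" "q2 < n" and q_eq: "q = q1 * n + q2"
    by (rule block_index_cases)
  obtain l where l: "l < r" "i \<in> \<Omega> l" by (rule class_exists[OF i])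
  obtain m where m: "m < r" "j \<in> \<Omega> m" by (rule class_exists[OF j])
  obtain f where f: "cp_kernel f" and f_eq: "\<forall>p1<n. \<forall>p2<n. \<forall>q1<n. \<forall>q2<n.
    (aug_bar ^\<^sub>m k) $$ (i * n\<^sup>2 + (p1 * n + p2), j * n\<^sup>2 + (q1 * n + q2)) = f p1 p2 q1 q2"
    using aug_bar_pow_block_cp_kernel[OF i j] by blast
  have diag: "f p p q q \<le> B" if "p < n" "q < n" for p q
  proof -
    have "f p p q q = (aug_bar ^\<^sub>m k) $$ (i * n\<^sup>2 + (p * n + p), j * n\<^sup>2 + (q * n + q))"
      using f_eq that by simp
    also have "\<dots> \<le> (aug_hat ^\<^sub>m k) $$ (l * n\<^sup>2 + (p * n + p), m * n\<^sup>2 + (q * n + q))"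
      by (rule aug_bar_pow_diag_le[OF l m that])
    also have "\<dots> \<le> B"
      using B[OF block_index_less[OF l(1) pair_index_less[OF that(1,1)]]
          block_index_less[OF m(1) pair_index_less[OF that(2,2)]]]
      by linarith
    finally show ?thesis .
  qed
  have "\<bar>f p1 p2 q1 q2\<bar> \<le> (f p1 p1 q1 q1 + f p2 p2 q2 q2) / 2"
    by (rule cp_kernel_abs_le[OF f])
  also have "\<dots> \<le> B"
    using diag[OF p(1) q(1)] diag[OF p(2) q(2)] by simp
  finally show ?thesis
    unfolding a_eq b_eq p_eq q_eq using f_eq p q by simp
qed

lemma rho_aug_hat_eq_rho_aug_bar: "rho aug_hat = rho aug_bar"
proof (cases "n = 0 \<or> r = 0")
  case True
  have "s = 0" if "r = 0"
  proof (rule ccontr)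
    assume "s \<noteq> 0"
    then obtain l where "l < r" by (metis class_exists not_gr_zero)
    with that show False by simp
  qed
  with True have "r * n\<^sup>2 = 0" "s * n\<^sup>2 = 0" by auto
  then have "aug_hat = aug_bar"
    using aug_mat_carrier[of n r That Ahat] aug_mat_carrier[of n s Tbar Abar]
    by (intro eq_matI) auto
  then show ?thesis by simp
next
  case False
  then obtain i where "i \<in> \<Omega> 0" using class_nonempty by blast
  then have "s > 0" using class_subset[of 0] False by auto
  with False have dims: "r * n\<^sup>2 > 0" "s * n\<^sup>2 > 0" by auto
  show ?thesis
  proof (rule antisym)
    show "rho aug_hat \<le> rho aug_bar"
      by (rule rho_le_if_pow_entries_dominated[OF aug_mat_carrier dims(1) aug_mat_carrier dims(2)])
        (rule aug_hat_pow_entry_bound)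
    show "rho aug_bar \<le> rho aug_hat"
      by (rule rho_le_if_pow_entries_dominated[OF aug_mat_carrier dims(2) aug_mat_carrier dims(1), where D = 1])
        (simp add: aug_bar_pow_entry_bound)
  qed
qed

end

theorem lemma2:
  fixes n p s r :: nat and A B :: "nat \<Rightarrow> real mat" and T :: "nat \<Rightarrow> nat \<Rightarrow> real"
    and \<Omega> :: "nat \<Rightarrow> nat set"
    and Abar Bbar :: "nat \<Rightarrow> real mat" and Tbar :: "nat \<Rightarrow> nat \<Rightarrow> real"
  assumes A: "\<forall>i<s. A i \<in> carrier_mat n n"
    and B: "\<forall>i<s. B i \<in> carrier_mat n p"
    and T: "markov s T"
    and part: "is_partition s r \<Omega>"
    and Abar: "\<forall>k<r. \<forall>i\<in>\<Omega> k. Abar i = red_mat \<Omega> A n n k"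
    and Bbar: "\<forall>k<r. \<forall>i\<in>\<Omega> k. Bbar i = red_mat \<Omega> B n p k"
    and Tbar: "markov s Tbar"
    and Tbar_sum: "\<forall>k<r. \<forall>l<r. \<forall>i\<in>\<Omega> k. (\<Sum>j\<in>\<Omega> l. Tbar i j) = red_T \<Omega> T k l"
  shows "rho (aug_mat n r (red_T \<Omega> T) (red_mat \<Omega> A n n)) = rho (aug_mat n s Tbar Abar)
       \<and> jsr n (red_mat \<Omega> A n n) r = jsr n Abar s"
proof -
  interpret mjs_lumping n s r \<Omega> Abar "red_mat \<Omega> A n n" Tbar "red_T \<Omega> T"
    using part Abar Tbar_sum Tbar by unfold_locales (auto simp: red_mat_def markov_def)
  show ?thesis
    using rho_aug_hat_eq_rho_aug_bar jsr_eq_if_same_image[OF Abar_image[symmetric]] by blast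
qed

end
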